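(* For every $\lambda>0$, the function $\tilde J_\lambda$ is strictly convex on $\mathfrak B_+^o\times\mathfrak B_+^m(E)$.
   Context: Let $m,n$ be positive integers, $V=\{1,\dots,m\}$, and $E\subseteq V\times V$ a symmetric set containing $(j,j)$ for all $j\in V$. Let $\mathbb T=[0,2\pi)$ and write $\int_{\mathbb T}f$ for $\int_0^{2\pi}f(\theta)\,\frac{d\theta}{2\pi}$. $\mathfrak B_+^m(E)$ is the set of matrix trigonometric polynomials $\mathbf Q(e^{i\theta})=Q_0+\frac12\sum_{k=1}^n\big(Q_ke^{-i\theta k}+Q_k^Te^{i\theta k}\big)$ with $Q_0\in\mathbb R^{m\times m}$ symmetric, $Q_1,\dots,Q_n\in\mathbb R^{m\times m}$, $[Q_k]_{jh}=0$ for all $k$ and all $(j,h)\notin E$, and $\mathbf Q(e^{i\theta})$ positive definite for every $\theta\in\mathbb T$. $\mathfrak B_+^o$ is the set of scalar trigonometric polynomials $\mathbf p(e^{i\theta})=1+\frac12\sum_{k=1}^n p_k(e^{-i\theta k}+e^{i\theta k})$, $p_k\in\mathbb R$, with $\mathbf p(e^{i\theta})>0$ for all $\theta$. Set $p_0=1$. Both sets are viewed as subsets of the finite-dimensional space of coefficients. Data: real $m\times m$ matrices $R_0,\dots,R_n$ ($R_0$ symmetric) and real numbers $c_0,\dots,c_n$. Define $$J(\mathbf p,\mathbf Q)=\int_{\mathbb T}\Big(\mathbf p\log\det(\mathbf p\mathbf Q^{-1})-m\mathbf p\Big)+\sum_{k=0}^n\mathrm{tr}(Q_k^TR_k)-\sum_{k=0}^np_kc_k,$$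 $g_\lambda(\mathbf p)=\lambda\int_{\mathbb T}\mathbf p^{-1}$, and $\tilde J_\lambda=J+g_\lambda$. *)

theory Defs
  imports "HOL-Analysis.Analysis"
begin

definition circ_int :: "(real \<Rightarrow> real) \<Rightarrow> real" where
  "circ_int f = integral {0..2*pi} f / (2*pi)"

definition trig_p :: "nat \<Rightarrow> (nat \<Rightarrow> real) \<Rightarrow> real \<Rightarrow> real" where
  "trig_p n p \<theta> = Re (1 + (1/2) * (\<Sum>k\<in>{1..n}. complex_of_real (p k) *
      (exp (- \<i> * complex_of_real (\<theta> * real k)) + exp (\<i> * complex_of_real (\<theta> * real k)))))"

definition trig_Q :: "nat \<Rightarrow> (nat \<Rightarrow> real^'m^'m) \<Rightarrow> real \<Rightarrow> complex^'m^'m" where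
  "trig_Q n Q \<theta> = (\<chi> i j. complex_of_real (Q 0 $ i $ j) + (1/2) * (\<Sum>k\<in>{1..n}.
      complex_of_real (Q k $ i $ j) * exp (- \<i> * complex_of_real (\<theta> * real k))
    + complex_of_real (transpose (Q k) $ i $ j) * exp (\<i> * complex_of_real (\<theta> * real k))))"

definition cpos_def :: "complex^'m^'m \<Rightarrow> bool" where
  "cpos_def M \<longleftrightarrow> (\<forall>i j. M $ i $ j = cnj (M $ j $ i)) \<and>
     (\<forall>v :: complex^'m. v \<noteq> 0 \<longrightarrow> 0 < Re (\<Sum>i\<in>UNIV. cnj (v $ i) * (M *v v) $ i))"

definition Bo :: "nat \<Rightarrow> (nat \<Rightarrow> real) set" where
  "Bo n = {p. p 0 = 1 \<and> (\<forall>k>n. p k = 0) \<and> (\<forall>\<theta>\<in>{0..<2*pi}. trig_p n p \<theta> > 0)}"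

definition Bm :: "nat \<Rightarrow> ('m \<times> 'm) set \<Rightarrow> (nat \<Rightarrow> real^'m^'m) set" where
  "Bm n E = {Q. transpose (Q 0) = Q 0 \<and> (\<forall>k>n. Q k = 0) \<and>
      (\<forall>k\<le>n. \<forall>j h. (j, h) \<notin> E \<longrightarrow> Q k $ j $ h = 0) \<and>
      (\<forall>\<theta>\<in>{0..<2*pi}. cpos_def (trig_Q n Q \<theta>))}"

definition J :: "nat \<Rightarrow> (nat \<Rightarrow> real^'m^'m) \<Rightarrow> (nat \<Rightarrow> real)
      \<Rightarrow> (nat \<Rightarrow> real) \<times> (nat \<Rightarrow> real^'m^'m) \<Rightarrow> real" where
  "J n R c pQ = (let p = fst pQ; Q = snd pQ in
     circ_int (\<lambda>\<theta>. trig_p n p \<theta> * ln (Re (det (trig_p n p \<theta> *\<^sub>R matrix_inv (trig_Q n Q \<theta>))))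
                   - real CARD('m) * trig_p n p \<theta>)
     + (\<Sum>k\<le>n. trace (transpose (Q k) ** R k)) - (\<Sum>k\<le>n. p k * c k))"

definition g :: "nat \<Rightarrow> real \<Rightarrow> (nat \<Rightarrow> real) \<Rightarrow> real" where
  "g n lam p = lam * circ_int (\<lambda>\<theta>. 1 / trig_p n p \<theta>)"

definition J_tilde :: "nat \<Rightarrow> (nat \<Rightarrow> real^'m^'m) \<Rightarrow> (nat \<Rightarrow> real) \<Rightarrow> real
      \<Rightarrow> (nat \<Rightarrow> real) \<times> (nat \<Rightarrow> real^'m^'m) \<Rightarrow> real" where
  "J_tilde n R c lam pQ = J n R c pQ + g n lam (fst pQ)"

definition strict_convex_on_coeffs ::
  "((nat \<Rightarrow> real) \<times> (nat \<Rightarrow> real^'m^'m)) set \<Rightarrow> ((nat \<Rightarrow> real) \<times> (nat \<Rightarrow> real^'m^'m) \<Rightarrow> real) \<Rightarrow> bool" where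
  "strict_convex_on_coeffs S f \<longleftrightarrow> (\<forall>x\<in>S. \<forall>y\<in>S. x \<noteq> y \<longrightarrow> (\<forall>t::real. 0 < t \<and> t < 1 \<longrightarrow>
     f (\<lambda>k. (1 - t) * fst x k + t * fst y k, \<lambda>k. (1 - t) *\<^sub>R snd x k + t *\<^sub>R snd y k)
       < (1 - t) * f x + t * f y))"

end

theory Submission
  imports Defs "HOL-Computational_Algebra.Fundamental_Theorem_Algebra"
begin

text \<open>Up to a linear function of the coefficients, J_tilde is the circle average of
  Phi(p(theta), Q(theta)) with Phi(P, Q) = - P ln det (Q / P) - m P + lambda / P. The first term is
  the perspective of the convex function - ln det, hence jointly convex, and lambda / P is strictly
  convex, so Phi is strictly convex unless both P and Q / P stay fixed.

  Strict concavity of ln det on positive definite Hermitian matrices comes from factoring the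
  polynomial z \<mapsto> det (A + z (B - A)). Every root is real and lies outside [0, 1], so on [0, 1]
  the polynomial is det A times a product of affine factors 1 + t (\<beta> - 1) with \<beta> > 0, each
  log-concave, strictly so when \<beta> \<noteq> 1. A root exists when A \<noteq> B: the maximiser of a Rayleigh
  quotient is a generalised eigenvector.

  Two distinct coefficient pairs have symbols that differ at some theta (Fourier coefficients are
  unique), and by continuity the pointwise strict inequality survives integration.\<close>

section \<open>Hermitian forms\<close>

definition hform :: "complex^'n^'n \<Rightarrow> complex^'n \<Rightarrow> complex^'n \<Rightarrow> complex" where
  "hform M u v = (\<Sum>i\<in>UNIV. cnj (u $ i) * (M *v v) $ i)"

definition hermitian :: "complex^'n^'n \<Rightarrow> bool" where
  "hermitian M \<longleftrightarrow> (\<forall>i j. M $ i $ j = cnj (M $ j $ i))"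

definition pencil :: "complex^'n^'n \<Rightarrow> complex^'n^'n \<Rightarrow> complex \<Rightarrow> complex^'n^'n" where
  "pencil A D z = (\<chi> i j. A $ i $ j + z * D $ i $ j)"

lemma cpos_def_iff: "cpos_def M \<longleftrightarrow> hermitian M \<and> (\<forall>v. v \<noteq> 0 \<longrightarrow> 0 < Re (hform M v v))"
  unfolding cpos_def_def hermitian_def hform_def by simp

lemma hform_expand: "hform M u v = (\<Sum>i\<in>UNIV. \<Sum>j\<in>UNIV. cnj (u $ i) * M $ i $ j * v $ j)"
  by (simp add: hform_def matrix_vector_mult_def sum_distrib_left mult.assoc)

lemma hform_swap:
  assumes "hermitian M"
  shows "hform M v u = cnj (hform M u v)"
proof -
  have "cnj (hform M u v) = (\<Sum>i\<in>UNIV. \<Sum>j\<in>UNIV. cnj (v $ j) * M $ j $ i * u $ i)"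
    using assms unfolding hform_expand cnj_sum hermitian_def
    by (intro sum.cong refl) (metis complex_cnj_cnj complex_cnj_mult mult.commute mult.left_commute)
  also have "\<dots> = hform M v u"
    unfolding hform_expand by (rule sum.swap)
  finally show ?thesis by simp
qed

lemma hform_diag_real: "hermitian M \<Longrightarrow> hform M v v = of_real (Re (hform M v v))"
  using hform_swap[of M v v] by (metis Reals_cnj_iff of_real_Re)

lemma hform_add_left: "hform M (u + v) w = hform M u w + hform M v w"
  by (simp add: hform_def distrib_right sum.distrib)

lemma hform_add_right: "hform M u (v + w) = hform M u v + hform M u w"
  by (simp add: hform_def matrix_vector_right_distrib distrib_left sum.distrib)

lemma hform_smult_left: "hform M (c *s u) v = cnj c * hform M u v"
  by (simp add: hform_def sum_distrib_left mult.assoc)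

lemma hform_smult_right: "hform M u (c *s v) = c * hform M u v"
  by (simp add: hform_def matrix_vector_mult_def sum_distrib_left mult.left_commute)

lemma hform_zero_left [simp]: "hform M 0 v = 0"
  by (simp add: hform_def)

lemma hform_kernel: "M *v v = 0 \<Longrightarrow> hform M u v = 0"
  by (simp add: hform_def)

lemma hform_mat_diff: "hform (A - B) u v = hform A u v - hform B u v"
  by (simp add: hform_def matrix_vector_mult_def sum_subtractf algebra_simps)

lemma hform_mat_uminus: "hform (- D) u v = - hform D u v"
  by (simp add: hform_def matrix_vector_mult_def sum_negf)

lemma hform_axis: "hform M (axis i 1) (axis j 1) = M $ i $ j"
proof -
  have "cnj (axis i 1 $ k) * x = (if k = i then x else 0)" for k and x :: complex
    by (simp add: axis_def)
  moreover have "M $ i $ l * axis j 1 $ l = (if l = j then M $ i $ l else 0)" for l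
    by (simp add: axis_def)
  ultimately show ?thesis
    by (simp add: hform_def matrix_vector_mult_def)
qed

lemma hform_scaleR_diag: "Re (hform M (c *\<^sub>R u) (c *\<^sub>R u)) = c\<^sup>2 * Re (hform M u u)"
proof -
  have "c *\<^sub>R u = complex_of_real c *s u"
    unfolding vec_eq_iff vector_scaleR_component by (simp add: scaleR_conv_of_real)
  then show ?thesis
    by (simp add: hform_smult_left hform_smult_right power2_eq_square)
qed

lemma Re_hform_id_diag: "Re (hform (mat 1) v v) = (\<Sum>i\<in>UNIV. (cmod (v $ i))\<^sup>2)"
  unfolding cmod_power2 by (simp add: hform_def Re_sum power2_eq_square)

lemma continuous_on_hform_diag: "continuous_on S (\<lambda>v. hform M v v)"
  unfolding hform_expand by (intro continuous_intros)

lemma hermitian_mat_diff: "hermitian A \<Longrightarrow> hermitian B \<Longrightarrow> hermitian (A - B)"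
  unfolding hermitian_def vector_minus_component by (metis complex_cnj_diff)

lemma hermitian_uminus: "hermitian D \<Longrightarrow> hermitian (- D)"
  unfolding hermitian_def vector_uminus_component by (metis complex_cnj_minus)

lemma hermitian_eq_0_if_hform_diag_Re_eq_0:
  assumes "hermitian D" and "\<And>v. Re (hform D v v) = 0"
  shows "D = 0"
proof -
  have diag: "hform D v v = 0" for v
    using assms hform_diag_real by (metis of_real_0)
  have "hform D u w = 0" for u w
  proof -
    have "hform D u w + hform D w u = 0"
      using diag[of "u + w"] by (simp add: hform_add_left hform_add_right diag add.commute)
    moreover have "\<i> * hform D u w - \<i> * hform D w u = 0"
      using diag[of "u + \<i> *s w"]
      by (simp add: hform_add_left hform_add_right hform_smult_left hform_smult_right diag)
    then have "hform D u w = hform D w u"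
      by (simp add: right_diff_distrib[symmetric])
    ultimately show ?thesis
      by simp
  qed
  then show ?thesis
    by (metis hform_axis vec_eq_iff zero_index)
qed

lemma det_eq_0_iff_kernel:
  fixes M :: "'a::field^'n^'n"
  shows "det M = 0 \<longleftrightarrow> (\<exists>v. v \<noteq> 0 \<and> M *v v = 0)"
  using invertible_det_nz[of M] invertible_left_inverse[of M] matrix_left_invertible_ker[of M]
  by blast

lemma pencil_mult_vec: "pencil A D z *v v = A *v v + z *s (D *v v)"
  by (simp add: vec_eq_iff pencil_def matrix_vector_mult_def sum.distrib sum_distrib_left
      distrib_right mult.assoc)

lemma hform_pencil: "hform (pencil A D z) u v = hform A u v + z * hform D u v"
  by (simp add: hform_def pencil_mult_vec distrib_left sum.distrib sum_distrib_left
      mult.left_commute)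

lemma pencil_0 [simp]: "pencil A D 0 = A"
  by (simp add: pencil_def vec_eq_iff)

lemma pencil_1 [simp]: "pencil A (B - A) 1 = B"
  by (simp add: pencil_def vec_eq_iff)

lemma pencil_of_real: "pencil A (B - A) (of_real t) = (1 - t) *\<^sub>R A + t *\<^sub>R B"
  unfolding vec_eq_iff pencil_def vector_add_component vector_scaleR_component
    vector_minus_component vec_lambda_beta
  by (simp add: scaleR_conv_of_real algebra_simps)

lemma pencil_uminus: "pencil A (- D) z = pencil A D (- z)"
  by (simp add: pencil_def vec_eq_iff)

lemma hermitian_pencil_of_real:
  assumes "hermitian A" and "hermitian D"
  shows "hermitian (pencil A D (of_real t))"
proof -
  have "cnj (A $ j $ i) = A $ i $ j" "cnj (D $ j $ i) = D $ i $ j" for i j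
    using assms unfolding hermitian_def by metis+
  then show ?thesis
    by (simp add: hermitian_def pencil_def)
qed

lemma poly_det_pencil:
  "poly (det (\<chi> i j. [:A $ i $ j, D $ i $ j:])) z = det (pencil A D z)"
  by (simp add: det_def poly_sum poly_prod of_int_poly pencil_def)

section \<open>Positive definite matrices and the log-determinant\<close>

lemma cpos_def_id: "cpos_def (mat 1 :: complex^'n^'n)"
  unfolding cpos_def_iff
proof safe
  show "hermitian (mat 1 :: complex^'n^'n)"
    by (simp add: hermitian_def mat_def)
next
  fix v :: "complex^'n"
  assume "v \<noteq> 0"
  then obtain k where "v $ k \<noteq> 0"
    by (metis vec_eq_iff zero_index)
  then have "0 < (\<Sum>i\<in>UNIV. (cmod (v $ i))\<^sup>2)"
    by (intro sum_pos2[of _ k]) auto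
  then show "0 < Re (hform (mat 1) v v)"
    by (simp add: Re_hform_id_diag)
qed

lemma cpos_def_det_nonzero: "cpos_def A \<Longrightarrow> det A \<noteq> 0"
  unfolding det_eq_0_iff_kernel cpos_def_iff by (metis hform_kernel less_irrefl zero_complex.sel(1))

text \<open>A kernel vector v of the pencil at z gives a + z (b - a) = 0 for the positive numbers
  a = v* A v and b = v* B v, so z = 1 / (1 - \<beta>) with \<beta> = b / a.\<close>
lemma det_pencil_eq_0_imp_eigenvalue:
  assumes A: "cpos_def A" and B: "cpos_def B" and z: "det (pencil A (B - A) z) = 0"
  obtains \<beta> :: real where "0 < \<beta>" and "\<beta> \<noteq> 1" and "z * of_real (1 - \<beta>) = 1"
proof -
  obtain v where v: "v \<noteq> 0" "pencil A (B - A) z *v v = 0"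
    using z by (auto simp: det_eq_0_iff_kernel)
  define a where "a = Re (hform A v v)"
  define b where "b = Re (hform B v v)"
  have a: "0 < a" "hform A v v = of_real a"
    using A v(1) hform_diag_real unfolding a_def cpos_def_iff by blast+
  have b: "0 < b" "hform B v v = of_real b"
    using B v(1) hform_diag_real unfolding b_def cpos_def_iff by blast+
  have "of_real a + z * (of_real b - of_real a) = 0"
    using hform_kernel[OF v(2), of v] by (simp add: hform_pencil hform_mat_diff a b)
  then have "z * of_real (1 - b / a) = 1"
    using a(1) by (simp add: field_simps)
  moreover have "b / a \<noteq> 1"
    using calculation by auto
  ultimately show thesis
    using a(1) b(1) by (intro that[of "b / a"]) auto
qed

text \<open>Perturbing w in the direction L w shows that the linear term 2 e |L w|^2 of the
  quadratic form cannot stay nonpositive unless L w = 0.\<close>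
lemma hform_nonpos_maximum_imp_kernel:
  assumes L: "hermitian L" and nonpos: "\<And>u. Re (hform L u u) \<le> 0"
    and w: "Re (hform L w w) = 0"
  shows "L *v w = 0"
proof -
  define y where "y = L *v w"
  define s where "s = Re (hform L y w)"
  define b where "b = Re (hform L y y)"
  have s_eq: "s = (\<Sum>i\<in>UNIV. (cmod (y $ i))\<^sup>2)"
    unfolding s_def hform_def y_def[symmetric] cmod_power2
    by (simp add: Re_sum power2_eq_square)
  have "Re (hform L w y) = s"
    unfolding s_def hform_swap[OF L, of w y] by simp
  then have quadratic: "Re (hform L (w + of_real e *s y) (w + of_real e *s y)) = 2 * e * s + e\<^sup>2 * b"
    for e
    using w unfolding s_def b_def
    by (simp add: hform_add_left hform_add_right hform_smult_left hform_smult_right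
        power2_eq_square algebra_simps)
  define c where "c = \<bar>b\<bar> + 1"
  have c: "0 < c" "0 < 2 * c + b"
    unfolding c_def by auto
  have "2 * (s / c) * s + (s / c)\<^sup>2 * b = s\<^sup>2 * (2 * c + b) / c\<^sup>2"
    using c by (simp add: field_simps power2_eq_square)
  then have "s\<^sup>2 * (2 * c + b) / c\<^sup>2 \<le> 0"
    using nonpos quadratic by metis
  then have "s = 0"
    using c by (simp add: divide_le_0_iff mult_le_0_iff)
  then have "\<forall>i\<in>UNIV. (cmod (y $ i))\<^sup>2 = 0"
    unfolding s_eq by (subst (asm) sum_nonneg_eq_0_iff) auto
  then show ?thesis
    by (simp add: y_def[symmetric] vec_eq_iff)
qed

text \<open>The maximiser w of the Rayleigh quotient v* K v / v* A v is a generalised eigenvector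
  K w = \<mu> A w, with \<mu> > 0 because the quotient is positive at v0.\<close>
lemma det_pencil_eq_0_if_hform_pos:
  fixes K A :: "complex^'n^'n"
  assumes K: "hermitian K" and A: "cpos_def A" and pos: "0 < Re (hform K v0 v0)"
  obtains z where "det (pencil A K z) = 0"
proof -
  have Apos: "0 < Re (hform A u u)" if "u \<noteq> 0" for u
    using A that unfolding cpos_def_iff by auto
  define f where "f v = Re (hform K v v) / Re (hform A v v)" for v
  define S where "S = sphere (0::complex^'n) 1"
  have v0: "v0 \<noteq> 0"
    using pos by auto
  have normalise: "f v = f ((1 / norm v) *\<^sub>R v)" "(1 / norm v) *\<^sub>R v \<in> S" if "v \<noteq> 0" for v
    using that by (simp_all add: f_def S_def hform_scaleR_diag)
  have "continuous_on S f"
    unfolding f_def S_def by (intro continuous_intros continuous_on_hform_diag)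
      (metis Apos mem_sphere_0 norm_zero less_irrefl zero_neq_one)
  then obtain w where w: "w \<in> S" "\<And>v. v \<in> S \<Longrightarrow> f v \<le> f w"
    using continuous_attains_sup[of S f] normalise(2)[OF v0] unfolding S_def by fastforce
  define \<mu> where "\<mu> = f w"
  have w0: "w \<noteq> 0"
    using w(1) by (auto simp: S_def)
  have le: "Re (hform K v v) \<le> \<mu> * Re (hform A v v)" for v
  proof (cases "v = 0")
    case False
    then have "f v \<le> \<mu>"
      using normalise[OF False] w(2) unfolding \<mu>_def by metis
    then show ?thesis
      using Apos[OF False] by (simp add: f_def divide_le_eq)
  qed simp
  have \<mu>: "0 < \<mu>"
    using le[of v0] pos Apos[OF v0] by (smt (verit) mult_nonpos_nonneg)
  define L where "L = pencil K A (of_real (- \<mu>))"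
  have "hermitian A"
    using A by (simp add: cpos_def_iff)
  then have "L *v w = 0"
    unfolding L_def using le Apos[OF w0]
    by (intro hform_nonpos_maximum_imp_kernel hermitian_pencil_of_real K)
      (auto simp: hform_pencil \<mu>_def f_def)
  then have "pencil A K (of_real (- 1 / \<mu>)) *v w = 0"
    using \<mu> by (simp add: L_def pencil_mult_vec vec_eq_iff field_simps)
  then show thesis
    using w0 by (intro that) (auto simp: det_eq_0_iff_kernel)
qed

lemma det_pencil_eq_0_exists:
  assumes A: "cpos_def A" and B: "cpos_def B" and "A \<noteq> B"
  obtains z where "det (pencil A (B - A) z) = 0"
proof -
  have D: "hermitian (B - A)"
    using A B by (simp add: cpos_def_iff hermitian_mat_diff)
  moreover have "B - A \<noteq> 0"
    using \<open>A \<noteq> B\<close> by simp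
  ultimately obtain v where "Re (hform (B - A) v v) \<noteq> 0"
    using hermitian_eq_0_if_hform_diag_Re_eq_0 by blast
  then consider "0 < Re (hform (B - A) v v)" | "0 < Re (hform (- (B - A)) v v)"
    by (metis hform_mat_uminus linorder_neqE_linordered_idom neg_0_less_iff_less uminus_complex.sel(1))
  then show thesis
  proof cases
    case 1
    then show thesis
      using det_pencil_eq_0_if_hform_pos[OF D A] that by blast
  next
    case 2
    then obtain z where "det (pencil A (- (B - A)) z) = 0"
      using det_pencil_eq_0_if_hform_pos[OF hermitian_uminus[OF D] A] by blast
    then have "det (pencil A (B - A) (- z)) = 0"
      by (simp only: pencil_uminus)
    then show thesis
      by (rule that)
  qed
qed

text \<open>The numbers \<beta> i are the eigenvalues of inverse A times B.\<close>
lemma det_pencil_factorization: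
  assumes A: "cpos_def A" and B: "cpos_def B"
  obtains N and \<beta> :: "nat \<Rightarrow> real"
  where "\<forall>i<N. 0 < \<beta> i \<and> \<beta> i \<noteq> 1"
    and "\<And>z. det (pencil A (B - A) z) = det A * (\<Prod>i<N. 1 + z * of_real (\<beta> i - 1))"
proof -
  define q where "q = det (\<chi> i j. [:A $ i $ j, (B - A) $ i $ j:])"
  have q: "poly q z = det (pencil A (B - A) z)" for z
    unfolding q_def by (rule poly_det_pencil)
  obtain \<rho> where decompose: "smult (lead_coeff q) (\<Prod>i<degree q. [:- \<rho> i, 1:]) = q"
    using complex_poly_decompose' by blast
  have "poly q z = lead_coeff q * (\<Prod>i<degree q. z - \<rho> i)" for z
    by (subst decompose[symmetric]) (simp add: poly_prod)
  then have roots: "det (pencil A (B - A) z) = lead_coeff q * (\<Prod>i<degree q. z - \<rho> i)" for z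
    by (simp add: q)
  have "\<exists>\<beta>. 0 < \<beta> \<and> \<beta> \<noteq> 1 \<and> \<rho> i * of_real (1 - \<beta>) = 1" if "i < degree q" for i
  proof -
    have "det (pencil A (B - A) (\<rho> i)) = 0"
      unfolding roots using that by (auto intro: prod_zero)
    then show ?thesis
      using det_pencil_eq_0_imp_eigenvalue[OF A B] by metis
  qed
  then obtain \<beta> where \<beta>: "\<And>i. i < degree q \<Longrightarrow> 0 < \<beta> i \<and> \<beta> i \<noteq> 1 \<and> \<rho> i * of_real (1 - \<beta> i) = 1"
    by metis
  have factor: "z - \<rho> i = - \<rho> i * (1 + z * of_real (\<beta> i - 1))" if "i < degree q" for i z
  proof -
    have "- \<rho> i * (1 + z * of_real (\<beta> i - 1)) = z * (\<rho> i * of_real (1 - \<beta> i)) - \<rho> i"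
      by (simp add: algebra_simps)
    then show ?thesis
      using \<beta>[OF that] by simp
  qed
  have det_A: "det A = lead_coeff q * (\<Prod>i<degree q. - \<rho> i)"
    using roots[of 0] by simp
  have "det (pencil A (B - A) z) = det A * (\<Prod>i<degree q. 1 + z * of_real (\<beta> i - 1))" for z
  proof -
    have "(\<Prod>i<degree q. z - \<rho> i) = (\<Prod>i<degree q. - \<rho> i * (1 + z * of_real (\<beta> i - 1)))"
      using factor by (intro prod.cong) auto
    then show ?thesis
      unfolding roots det_A prod.distrib by (simp only: mult.assoc)
  qed
  then show thesis
    using \<beta> by (intro that[of "degree q" \<beta>]) auto
qed

lemma cpos_def_det:
  fixes M :: "complex^'n^'n"
  assumes "cpos_def M"
  shows "det M = of_real (Re (det M))" and "0 < Re (det M)"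
proof -
  obtain N :: nat and \<beta> :: "nat \<Rightarrow> real" where \<beta>: "\<forall>i<N. 0 < \<beta> i \<and> \<beta> i \<noteq> 1"
    and eq: "\<And>z. det (pencil (mat 1) (M - mat 1) z) = det (mat 1 :: complex^'n^'n) *
      (\<Prod>i<N. 1 + z * of_real (\<beta> i - 1))"
    by (erule det_pencil_factorization[OF cpos_def_id assms])
  have "det M = (\<Prod>i<N. 1 + of_real (\<beta> i - 1))"
    using eq[of 1] by (simp only: pencil_1 det_I mult_1_left)
  also have "\<dots> = of_real (prod \<beta> {..<N})"
    by simp
  finally have "det M = of_real (prod \<beta> {..<N})" .
  moreover have "0 < prod \<beta> {..<N}"
    by (rule prod_pos) (use \<beta> in auto)
  ultimately have "det M = of_real (Re (det M)) \<and> 0 < Re (det M)"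
    by (simp only: Re_complex_of_real)
  then show "det M = of_real (Re (det M))" and "0 < Re (det M)"
    by simp_all
qed

lemma ln_less_convex_comb:
  fixes \<beta> t :: real
  assumes \<beta>: "0 < \<beta>" "\<beta> \<noteq> 1" and t: "0 < t" "t < 1"
  shows "t * ln \<beta> < ln ((1 - t) + t * \<beta>)"
proof -
  define m where "m = (1 - t) + t * \<beta>"
  have "0 < t * \<beta>"
    using \<beta> t by simp
  then have m: "0 < m"
    using t unfolding m_def by linarith
  have ln_less: "ln x < x - 1" if "0 < x" "x \<noteq> 1" for x :: real
    using that ln_le_minus_one ln_eq_minus_one by fastforce
  have "(1 - t) * ln (1 / m) + t * ln (\<beta> / m) < (1 - t) * (1 / m - 1) + t * (\<beta> / m - 1)"
  proof (cases "m = 1")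
    case True
    then show ?thesis
      using \<beta> t ln_less[of \<beta>] by simp
  next
    case False
    then have "(1 - t) * ln (1 / m) < (1 - t) * (1 / m - 1)"
      using m t ln_less[of "1 / m"] by (simp add: mult_strict_left_mono)
    moreover have "t * ln (\<beta> / m) \<le> t * (\<beta> / m - 1)"
      using m t \<beta> ln_le_minus_one[of "\<beta> / m"] by (simp add: mult_left_mono)
    ultimately show ?thesis
      by linarith
  qed
  moreover have "(1 - t) * (1 / m - 1) + t * (\<beta> / m - 1) = 0"
    using m unfolding m_def by (simp add: field_simps)
  moreover have "(1 - t) * ln (1 / m) + t * ln (\<beta> / m) = t * ln \<beta> - ln m"
    using m \<beta> by (simp add: ln_div algebra_simps)
  ultimately show ?thesis
    unfolding m_def by linarith
qed

lemma ln_det_strict_concave: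
  assumes A: "cpos_def A" and B: "cpos_def B" and "A \<noteq> B" and t: "0 < t" "t < 1"
  shows "(1 - t) * ln (Re (det A)) + t * ln (Re (det B))
    < ln (Re (det ((1 - t) *\<^sub>R A + t *\<^sub>R B)))"
proof -
  obtain N :: nat and \<beta> :: "nat \<Rightarrow> real" where \<beta>: "\<forall>i<N. 0 < \<beta> i \<and> \<beta> i \<noteq> 1"
    and eq: "\<And>z. det (pencil A (B - A) z) = det A * (\<Prod>i<N. 1 + z * of_real (\<beta> i - 1))"
    by (erule det_pencil_factorization[OF A B])
  have "0 < N"
  proof (rule ccontr)
    assume "\<not> 0 < N"
    moreover obtain z where "det (pencil A (B - A) z) = 0"
      using det_pencil_eq_0_exists[OF A B \<open>A \<noteq> B\<close>] .
    ultimately show False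
      using eq[of z] cpos_def_det_nonzero[OF A] by simp
  qed
  define a where "a = Re (det A)"
  have a: "0 < a" "det A = of_real a"
    unfolding a_def using cpos_def_det[OF A] by simp_all
  have ln_a_prod: "ln (a * prod f {..<N}) = ln a + (\<Sum>i<N. ln (f i))"
    if "\<And>i. i < N \<Longrightarrow> 0 < f i" for f
  proof -
    have "0 < prod f {..<N}"
      by (rule prod_pos) (use that in auto)
    moreover have "ln (prod f {..<N}) = (\<Sum>i<N. ln (f i))"
      by (rule ln_prod) (use that in force)+
    ultimately show ?thesis
      by (simp add: ln_mult_pos[OF a(1)])
  qed
  have "det B = of_real (a * prod \<beta> {..<N})"
    using eq[of 1] a by simp
  then have ln_B: "ln (Re (det B)) = ln a + (\<Sum>i<N. ln (\<beta> i))"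
    using ln_a_prod[of \<beta>] \<beta> by (simp only: Re_complex_of_real)
  have factor: "1 + of_real t * of_real (\<beta> i - 1) = (of_real ((1 - t) + t * \<beta> i) :: complex)"
    for i
    by (simp add: algebra_simps)
  have "det ((1 - t) *\<^sub>R A + t *\<^sub>R B) = of_real (a * (\<Prod>i<N. (1 - t) + t * \<beta> i))"
    using eq[of "of_real t"]
    by (simp only: pencil_of_real a(2) factor of_real_mult of_real_prod)
  moreover have "0 < (1 - t) + t * \<beta> i" if "i < N" for i
    using \<beta> that t by (simp add: add_pos_pos)
  ultimately have ln_comb: "ln (Re (det ((1 - t) *\<^sub>R A + t *\<^sub>R B)))
      = ln a + (\<Sum>i<N. ln ((1 - t) + t * \<beta> i))"
    using ln_a_prod[of "\<lambda>i. (1 - t) + t * \<beta> i"] by (simp only: Re_complex_of_real)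
  have "(\<Sum>i<N. t * ln (\<beta> i)) < (\<Sum>i<N. ln ((1 - t) + t * \<beta> i))"
    using \<open>0 < N\<close> \<beta> t by (intro sum_strict_mono ln_less_convex_comb) auto
  then show ?thesis
    unfolding ln_B ln_comb a_def[symmetric] by (simp add: algebra_simps sum_distrib_left)
qed

section \<open>The integrand\<close>

lemma convex_comb_pos:
  fixes a b t :: real
  assumes "0 < a" "0 < b" "0 \<le> t" "t \<le> 1"
  shows "0 < (1 - t) * a + t * b"
proof (cases "t = 1")
  case False
  then have "0 < (1 - t) * a"
    using assms by simp
  moreover have "0 \<le> t * b"
    using assms by simp
  ultimately show ?thesis
    by linarith
qed (use assms in simp)

lemma hform_scaleR_mat: "hform (c *\<^sub>R M) u v = of_real c * hform M u v"
  unfolding hform_def matrix_vector_mult_def vector_scaleR_component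
  by (simp add: scaleR_conv_of_real sum_distrib_left ac_simps)

lemma cpos_def_scaleR:
  assumes M: "cpos_def M" and c: "0 < c"
  shows "cpos_def (c *\<^sub>R M)"
proof -
  have "cnj (M $ j $ i) = M $ i $ j" for i j
    using M unfolding cpos_def_iff hermitian_def by (metis complex_cnj_cnj)
  then have "hermitian (c *\<^sub>R M)"
    unfolding hermitian_def vector_scaleR_component by (simp add: scaleR_conv_of_real)
  then show ?thesis
    using M c by (simp add: cpos_def_iff hform_scaleR_mat)
qed

lemma cpos_def_convex_comb:
  assumes A: "cpos_def A" and B: "cpos_def B" and t: "0 \<le> t" "t \<le> 1"
  shows "cpos_def ((1 - t) *\<^sub>R A + t *\<^sub>R B)"
  unfolding pencil_of_real[symmetric] cpos_def_iff
proof safe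
  have "hermitian A" "hermitian B"
    using A B by (simp_all add: cpos_def_iff)
  then show "hermitian (pencil A (B - A) (of_real t))"
    by (intro hermitian_pencil_of_real hermitian_mat_diff)
next
  fix v :: "complex^'a"
  assume "v \<noteq> 0"
  then have "0 < (1 - t) * Re (hform A v v) + t * Re (hform B v v)"
    using A B t by (intro convex_comb_pos) (simp_all add: cpos_def_iff)
  then show "0 < Re (hform (pencil A (B - A) (of_real t)) v v)"
    by (simp add: hform_pencil hform_mat_diff algebra_simps)
qed

lemma det_scaleR: "det (c *\<^sub>R (M :: complex^'n^'n)) = of_real c ^ CARD('n) * det M"
proof -
  have "c *\<^sub>R M = (\<chi> i. of_real c *s M $ i)"
    unfolding vec_eq_iff vector_scaleR_component vec_lambda_beta vector_scalar_mult_def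
    by (simp add: scaleR_conv_of_real)
  then show ?thesis
    using det_rows_mul[of "\<lambda>i. of_real c" "\<lambda>i. M $ i"] by simp
qed

lemma ln_det_scaleR:
  fixes M :: "complex^'n^'n"
  assumes "cpos_def M" and "0 < c"
  shows "ln (Re (det (c *\<^sub>R M))) = real CARD('n) * ln c + ln (Re (det M))"
proof -
  have "Re (det (c *\<^sub>R M)) = c ^ CARD('n) * Re (det M)"
    by (subst cpos_def_det(1)[OF assms(1)]) (simp add: det_scaleR flip: of_real_power)
  then show ?thesis
    using cpos_def_det(2)[OF assms(1)] assms(2) by (simp add: ln_mult_pos ln_realpow)
qed

lemma ln_det_concave:
  assumes "cpos_def A" "cpos_def B" "0 < t" "t < 1"
  shows "(1 - t) * ln (Re (det A)) + t * ln (Re (det B))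
    \<le> ln (Re (det ((1 - t) *\<^sub>R A + t *\<^sub>R B)))"
proof (cases "A = B")
  case True
  then have "(1 - t) *\<^sub>R A + t *\<^sub>R B = A"
    by (simp add: scaleR_left_distrib[symmetric])
  then show ?thesis
    using True by (simp add: algebra_simps)
next
  case False
  then show ?thesis
    using ln_det_strict_concave[OF assms(1,2) False assms(3,4)] by simp
qed

lemma ln_det_perspective_concave:
  fixes Q1 Q2 :: "complex^'n^'n"
  assumes P: "0 < P1" "0 < P2" and Q: "cpos_def Q1" "cpos_def Q2" and t: "0 < t" "t < 1"
  defines "P \<equiv> (1 - t) * P1 + t * P2" and "Q \<equiv> (1 - t) *\<^sub>R Q1 + t *\<^sub>R Q2"
  shows "(1 - t) * P1 * ln (Re (det ((1 / P1) *\<^sub>R Q1))) + t * P2 * ln (Re (det ((1 / P2) *\<^sub>R Q2)))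
      \<le> P * ln (Re (det ((1 / P) *\<^sub>R Q)))"
    and "(1 / P1) *\<^sub>R Q1 \<noteq> (1 / P2) *\<^sub>R Q2 \<Longrightarrow>
      (1 - t) * P1 * ln (Re (det ((1 / P1) *\<^sub>R Q1))) + t * P2 * ln (Re (det ((1 / P2) *\<^sub>R Q2)))
      < P * ln (Re (det ((1 / P) *\<^sub>R Q)))"
proof -
  have P_pos: "0 < P"
    unfolding P_def using P t by (intro convex_comb_pos) auto
  define s where "s = t * P2 / P"
  have "0 < (1 - t) * P1" "0 < t * P2"
    using P t by simp_all
  then have s: "0 < s" "s < 1"
    unfolding s_def using P_pos by (simp_all add: field_simps P_def)
  have weights: "P * (1 - s) = (1 - t) * P1" "P * s = t * P2"
    unfolding s_def using P_pos by (simp_all add: field_simps P_def)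
  define A where "A = (1 / P1) *\<^sub>R Q1"
  define B where "B = (1 / P2) *\<^sub>R Q2"
  have A: "cpos_def A" and B: "cpos_def B"
    unfolding A_def B_def using P Q by (simp_all add: cpos_def_scaleR)
  have "(1 - s) / P1 = (1 - t) / P" "s / P2 = t / P"
    using weights P P_pos by (simp_all add: field_simps)
  then have comb: "(1 / P) *\<^sub>R Q = (1 - s) *\<^sub>R A + s *\<^sub>R B"
    unfolding A_def B_def Q_def by (simp add: scaleR_add_right)
  have rescale: "(1 - t) * P1 * x + t * P2 * y = P * ((1 - s) * x + s * y)" for x y
    unfolding weights[symmetric] by (simp add: algebra_simps)
  show "(1 - t) * P1 * ln (Re (det ((1 / P1) *\<^sub>R Q1))) + t * P2 * ln (Re (det ((1 / P2) *\<^sub>R Q2)))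
      \<le> P * ln (Re (det ((1 / P) *\<^sub>R Q)))"
    unfolding rescale comb A_def[symmetric] B_def[symmetric]
    using ln_det_concave[OF A B s] P_pos by (simp add: mult_left_mono)
  assume "(1 / P1) *\<^sub>R Q1 \<noteq> (1 / P2) *\<^sub>R Q2"
  then show "(1 - t) * P1 * ln (Re (det ((1 / P1) *\<^sub>R Q1))) + t * P2 * ln (Re (det ((1 / P2) *\<^sub>R Q2)))
      < P * ln (Re (det ((1 / P) *\<^sub>R Q)))"
    unfolding rescale comb A_def[symmetric] B_def[symmetric]
    using ln_det_strict_concave[OF A B _ s] P_pos by simp
qed

lemma inverse_strict_convex:
  fixes a b t :: real
  assumes "0 < a" "0 < b" "a \<noteq> b" "0 < t" "t < 1"
  shows "1 / ((1 - t) * a + t * b) < (1 - t) / a + t / b"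
proof -
  define P where "P = (1 - t) * a + t * b"
  have P: "0 < P"
    unfolding P_def using assms by (intro convex_comb_pos) auto
  have "(1 - t) / a + t / b - 1 / P = t * (1 - t) * (a - b)\<^sup>2 / (a * b * P)"
    using assms P unfolding P_def by (simp add: field_simps power2_eq_square)
  moreover have "0 < t * (1 - t) * (a - b)\<^sup>2 / (a * b * P)"
    using assms P by simp
  ultimately show ?thesis
    unfolding P_def by linarith
qed

definition J_tilde_density :: "real \<Rightarrow> real \<Rightarrow> complex^'n^'n \<Rightarrow> real" where
  "J_tilde_density lam P Q =
    P * (real CARD('n) * ln P - ln (Re (det Q))) - real CARD('n) * P + lam / P"

lemma J_tilde_density_perspective:
  fixes Q :: "complex^'n^'n"
  assumes "cpos_def Q" and "0 < P"
  shows "J_tilde_density lam P Q =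
    - (P * ln (Re (det ((1 / P) *\<^sub>R Q)))) - real CARD('n) * P + lam / P"
  using assms by (simp add: J_tilde_density_def ln_det_scaleR ln_div algebra_simps)

lemma J_tilde_density_strict_convex:
  fixes Q1 Q2 :: "complex^'n^'n"
  assumes P: "0 < P1" "0 < P2" and Q: "cpos_def Q1" "cpos_def Q2" and lam: "0 < lam"
    and t: "0 < t" "t < 1" and "P1 \<noteq> P2 \<or> Q1 \<noteq> Q2"
  shows "J_tilde_density lam ((1 - t) * P1 + t * P2) ((1 - t) *\<^sub>R Q1 + t *\<^sub>R Q2)
    < (1 - t) * J_tilde_density lam P1 Q1 + t * J_tilde_density lam P2 Q2"
proof -
  define P where "P = (1 - t) * P1 + t * P2"
  define Q where "Q = (1 - t) *\<^sub>R Q1 + t *\<^sub>R Q2"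
  define X where "X = ln (Re (det ((1 / P) *\<^sub>R Q)))"
  define X1 where "X1 = ln (Re (det ((1 / P1) *\<^sub>R Q1)))"
  define X2 where "X2 = ln (Re (det ((1 / P2) *\<^sub>R Q2)))"
  define L where "L = P * X - ((1 - t) * P1 * X1 + t * P2 * X2)"
  define I where "I = (1 - t) * (lam / P1) + t * (lam / P2) - lam / P"
  have "cpos_def Q"
    unfolding Q_def using Q t by (intro cpos_def_convex_comb) auto
  moreover have "0 < P"
    unfolding P_def using P t by (intro convex_comb_pos) auto
  ultimately have dP: "J_tilde_density lam P Q = - (P * X) - real CARD('n) * P + lam / P"
    unfolding X_def by (rule J_tilde_density_perspective)
  have d1: "J_tilde_density lam P1 Q1 = - (P1 * X1) - real CARD('n) * P1 + lam / P1"
    unfolding X1_def using Q(1) P(1) by (rule J_tilde_density_perspective)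
  have d2: "J_tilde_density lam P2 Q2 = - (P2 * X2) - real CARD('n) * P2 + lam / P2"
    unfolding X2_def using Q(2) P(2) by (rule J_tilde_density_perspective)
  have gap: "(1 - t) * J_tilde_density lam P1 Q1 + t * J_tilde_density lam P2 Q2
      - J_tilde_density lam P Q = L + I"
    unfolding dP d1 d2 L_def I_def by (simp add: P_def algebra_simps)
  have L: "0 \<le> L"
    using ln_det_perspective_concave(1)[OF P Q t]
    unfolding L_def X_def X1_def X2_def P_def Q_def by simp
  have I_pos: "0 < I" if "P1 \<noteq> P2"
  proof -
    have "lam * (1 / P) < lam * ((1 - t) / P1 + t / P2)"
      unfolding P_def by (rule mult_strict_left_mono[OF inverse_strict_convex[OF P that t] lam])
    then show ?thesis
      unfolding I_def by (simp add: algebra_simps)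
  qed
  have I_0: "I = 0" if "P1 = P2"
    unfolding I_def P_def that by (simp add: algebra_simps add_divide_distrib[symmetric])
  have "0 < L" if "P1 = P2"
  proof -
    have "(1 / P1) *\<^sub>R Q1 \<noteq> (1 / P2) *\<^sub>R Q2"
      using \<open>P1 \<noteq> P2 \<or> Q1 \<noteq> Q2\<close> P that by auto
    then show ?thesis
      using ln_det_perspective_concave(2)[OF P Q t]
      unfolding L_def X_def X1_def X2_def P_def Q_def by simp
  qed
  then show ?thesis
    using gap L I_pos I_0 unfolding P_def Q_def by fastforce
qed

section \<open>Trigonometric polynomials\<close>

definition fourier_mode :: "int \<Rightarrow> real \<Rightarrow> complex" where
  "fourier_mode l \<theta> = exp (\<i> * of_int l * of_real \<theta>)"

definition trig_poly :: "nat \<Rightarrow> complex \<Rightarrow> (nat \<Rightarrow> complex) \<Rightarrow> (nat \<Rightarrow> complex) \<Rightarrow> real \<Rightarrow> complex"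
  where "trig_poly n a0 a b \<theta> =
    a0 + (\<Sum>k=1..n. a k * fourier_mode (- int k) \<theta> + b k * fourier_mode (int k) \<theta>)"

lemma fourier_mode_mult: "fourier_mode l \<theta> * fourier_mode l' \<theta> = fourier_mode (l + l') \<theta>"
  unfolding fourier_mode_def mult_exp_exp by (simp add: algebra_simps)

lemma fourier_mode_2pi: "fourier_mode l (2 * pi) = 1"
proof -
  have "fourier_mode l (2 * pi) = exp (\<i> * (of_int l * (of_real pi * 2)))"
    unfolding fourier_mode_def by (simp add: ac_simps)
  then show ?thesis
    by (simp only: exp_2pi_1_int)
qed

lemma continuous_on_fourier_mode: "continuous_on S (fourier_mode l)"
  unfolding fourier_mode_def by (intro continuous_intros)

lemma fourier_mode_0 [simp]: "fourier_mode 0 \<theta> = 1"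
  by (simp add: fourier_mode_def)

lemma has_integral_fourier_mode:
  "(fourier_mode l has_integral (if l = 0 then 2 * pi else 0)) {0..2 * pi}"
proof -
  have "fourier_mode l integrable_on {0..2 * pi}"
    by (rule integrable_continuous_interval[OF continuous_on_fourier_mode])
  moreover have "integral {0..2 * pi} (fourier_mode l) = (if l = 0 then 2 * pi else 0)"
  proof (cases "l = 0")
    case True
    then show ?thesis
      by (simp add: fourier_mode_0[abs_def] scaleR_conv_of_real)
  next
    case False
    then have "integral {0..2 * pi} (fourier_mode l)
        = (exp ((\<i> * of_int l) * of_real (2 * pi)) - 1) / (\<i> * of_int l)"
      unfolding fourier_mode_def[abs_def] by (intro integral_exp) auto
    also have "exp ((\<i> * of_int l) * of_real (2 * pi)) = 1"
      using fourier_mode_2pi[of l] by (simp add: fourier_mode_def)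
    finally show ?thesis
      using False by simp
  qed
  ultimately show ?thesis
    by (metis integrable_integral)
qed

text \<open>Orthogonality: integrating against the mode l picks out the coefficient of the mode -l.\<close>
lemma has_integral_fourier_mode_trig_poly:
  fixes a0 :: complex and a b :: "nat \<Rightarrow> complex"
  shows "((\<lambda>\<theta>. fourier_mode l \<theta> * trig_poly n a0 a b \<theta>) has_integral
    of_real (2 * pi) * ((if l = 0 then a0 else 0) +
      (\<Sum>k=1..n. (if l = int k then a k else 0) + (if l = - int k then b k else 0))))
    {0..2 * pi}"
proof -
  have "fourier_mode l \<theta> * (a k * fourier_mode (- int k) \<theta> + b k * fourier_mode (int k) \<theta>)
      = a k * fourier_mode (l - int k) \<theta> + b k * fourier_mode (l + int k) \<theta>" for k \<theta>
    unfolding distrib_left mult.left_commute[of "fourier_mode l \<theta>"] fourier_mode_mult by simp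
  then have "fourier_mode l \<theta> * trig_poly n a0 a b \<theta> = a0 * fourier_mode l \<theta> +
      (\<Sum>k=1..n. a k * fourier_mode (l - int k) \<theta> + b k * fourier_mode (l + int k) \<theta>)" for \<theta>
    by (simp add: trig_poly_def distrib_left sum_distrib_left mult.commute)
  moreover have "((\<lambda>\<theta>. a0 * fourier_mode l \<theta> +
      (\<Sum>k=1..n. a k * fourier_mode (l - int k) \<theta> + b k * fourier_mode (l + int k) \<theta>)) has_integral
      a0 * (if l = 0 then 2 * pi else 0) + (\<Sum>k=1..n. a k * (if l - int k = 0 then 2 * pi else 0)
        + b k * (if l + int k = 0 then 2 * pi else 0))) {0..2 * pi}"
    by (intro has_integral_add has_integral_sum has_integral_mult_right has_integral_fourier_mode)
      auto
  ultimately show ?thesis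
    by (auto elim!: has_integral_eq_rhs intro!: sum.cong
        simp: distrib_left sum_distrib_left algebra_simps)
qed

lemma trig_poly_eq_0_imp_coeffs_eq_0:
  fixes a0 :: complex and a b :: "nat \<Rightarrow> complex"
  assumes "\<forall>\<theta>\<in>{0..2 * pi}. trig_poly n a0 a b \<theta> = 0"
  shows "a0 = 0" and "k \<in> {1..n} \<Longrightarrow> a k = 0" and "k \<in> {1..n} \<Longrightarrow> b k = 0"
proof -
  have coeff: "(if l = 0 then a0 else 0) +
      (\<Sum>k=1..n. (if l = int k then a k else 0) + (if l = - int k then b k else 0)) = 0" for l
  proof -
    have "((\<lambda>\<theta>. fourier_mode l \<theta> * trig_poly n a0 a b \<theta>) has_integral 0) {0..2 * pi}"
      by (rule has_integral_is_0) (use assms in auto)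
    from has_integral_unique[OF this has_integral_fourier_mode_trig_poly] show ?thesis
      by simp
  qed
  show "a0 = 0"
    using coeff[of 0] by (simp add: sum.neutral)
  show "a k = 0" if k: "k \<in> {1..n}"
  proof -
    have "(\<Sum>j=1..n. (if int k = int j then a j else 0) + (if int k = - int j then b j else 0))
        = (\<Sum>j=1..n. if j = k then a j else 0)"
      by (intro sum.cong) auto
    then show ?thesis
      using coeff[of "int k"] k by simp
  qed
  show "b k = 0" if k: "k \<in> {1..n}"
  proof -
    have "(\<Sum>j=1..n. (if - int k = int j then a j else 0) + (if - int k = - int j then b j else 0))
        = (\<Sum>j=1..n. if j = k then b j else 0)"
      using k by (intro sum.cong) auto
    then show ?thesis
      using coeff[of "- int k"] k by simp
  qed
qed

lemma trig_poly_lincomb: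
  "trig_poly n (x * a0 + y * a0') (\<lambda>k. x * a k + y * a' k) (\<lambda>k. x * b k + y * b' k) \<theta>
    = x * trig_poly n a0 a b \<theta> + y * trig_poly n a0' a' b' \<theta>"
  by (simp add: trig_poly_def sum.distrib sum_distrib_left algebra_simps)

lemma trig_poly_diff:
  "trig_poly n a0 a b \<theta> - trig_poly n a0' a' b' \<theta>
    = trig_poly n (a0 - a0') (\<lambda>k. a k - a' k) (\<lambda>k. b k - b' k) \<theta>"
  by (simp add: trig_poly_def sum_subtractf algebra_simps)

lemma trig_poly_2pi: "trig_poly n a0 a b (2 * pi) = trig_poly n a0 a b 0"
proof -
  have "fourier_mode l 0 = 1" for l
    by (simp add: fourier_mode_def)
  then show ?thesis
    by (simp add: trig_poly_def fourier_mode_2pi)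
qed

lemma continuous_on_trig_poly [continuous_intros]: "continuous_on S (trig_poly n a0 a b)"
  unfolding trig_poly_def by (intro continuous_intros continuous_on_fourier_mode)

lemma exp_eq_fourier_mode:
  "exp (\<i> * of_real (\<theta> * real k)) = fourier_mode (int k) \<theta>"
  "exp (- \<i> * of_real (\<theta> * real k)) = fourier_mode (- int k) \<theta>"
  by (simp_all add: fourier_mode_def ac_simps)

lemma cos_eq_fourier_modes:
  "of_real (cos (\<theta> * real k)) = (fourier_mode (- int k) \<theta> + fourier_mode (int k) \<theta>) / 2"
proof -
  have "cos (of_real (\<theta> * real k)) = (exp (\<i> * of_real (\<theta> * real k))
      + exp (- (\<i> * of_real (\<theta> * real k)))) / 2"
    by (rule cos_exp_eq)
  then show ?thesis
    unfolding cos_of_real exp_eq_fourier_mode[symmetric] by (simp add: add.commute)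
qed

lemma trig_p_eq_cos: "trig_p n p \<theta> = 1 + (\<Sum>k=1..n. p k * cos (\<theta> * real k))"
proof -
  have "exp (- \<i> * of_real (\<theta> * real k)) + exp (\<i> * of_real (\<theta> * real k))
      = 2 * of_real (cos (\<theta> * real k))" for k
    unfolding exp_eq_fourier_mode cos_eq_fourier_modes by simp
  then have "trig_p n p \<theta> = Re (1 + (1 / 2) * (\<Sum>k=1..n. of_real (p k) * (2 * of_real (cos (\<theta> * real k)))))"
    by (simp only: trig_p_def)
  also have "\<dots> = Re (of_real (1 + (\<Sum>k=1..n. p k * cos (\<theta> * real k))))"
    by (simp add: sum_distrib_left)
  finally show ?thesis
    by simp
qed

lemma trig_p_eq_trig_poly:
  "of_real (trig_p n p \<theta>) = trig_poly n 1 (\<lambda>k. of_real (p k) / 2) (\<lambda>k. of_real (p k) / 2) \<theta>"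
  unfolding trig_p_eq_cos trig_poly_def by (simp add: cos_eq_fourier_modes field_simps)

lemma trig_Q_eq_trig_poly:
  "trig_Q n Q \<theta> $ i $ j = trig_poly n (of_real (Q 0 $ i $ j))
    (\<lambda>k. of_real (Q k $ i $ j) / 2) (\<lambda>k. of_real (Q k $ j $ i) / 2) \<theta>"
  unfolding trig_Q_def trig_poly_def exp_eq_fourier_mode
  by (simp add: transpose_def sum_divide_distrib field_simps)

lemma trig_p_convex_comb:
  "trig_p n (\<lambda>k. (1 - t) * p1 k + t * p2 k) \<theta> = (1 - t) * trig_p n p1 \<theta> + t * trig_p n p2 \<theta>"
proof -
  have "(\<Sum>k=1..n. ((1 - t) * p1 k + t * p2 k) * cos (\<theta> * real k))
      = (1 - t) * (\<Sum>k=1..n. p1 k * cos (\<theta> * real k)) + t * (\<Sum>k=1..n. p2 k * cos (\<theta> * real k))"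
    by (simp add: sum.distrib sum_distrib_left distrib_right mult.assoc)
  then show ?thesis
    unfolding trig_p_eq_cos by (simp add: algebra_simps)
qed

lemma trig_Q_convex_comb:
  "trig_Q n (\<lambda>k. (1 - t) *\<^sub>R Q1 k + t *\<^sub>R Q2 k) \<theta>
    = (1 - t) *\<^sub>R trig_Q n Q1 \<theta> + t *\<^sub>R trig_Q n Q2 \<theta>"
  unfolding vec_eq_iff vector_add_component vector_scaleR_component
  by (simp only: trig_Q_eq_trig_poly trig_poly_lincomb[symmetric] scaleR_conv_of_real[where 'a=complex]
      vector_add_component vector_scaleR_component real_scaleR_def of_real_add of_real_mult
      add_divide_distrib times_divide_eq_right) simp

lemma continuous_on_trig_p: "continuous_on S (trig_p n p)"
  unfolding trig_p_eq_cos[abs_def] by (intro continuous_intros)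

lemma continuous_on_Re_det_trig_Q: "continuous_on S (\<lambda>\<theta>. Re (det (trig_Q n Q \<theta>)))"
  unfolding det_def trig_Q_eq_trig_poly by (intro continuous_intros)

lemma trig_p_coeffs_unique:
  assumes "\<forall>\<theta>\<in>{0..2 * pi}. trig_p n p1 \<theta> = trig_p n p2 \<theta>" and "k \<in> {1..n}"
  shows "p1 k = p2 k"
proof -
  have "trig_poly n (1 - 1) (\<lambda>k. of_real (p1 k) / 2 - of_real (p2 k) / 2)
      (\<lambda>k. of_real (p1 k) / 2 - of_real (p2 k) / 2) \<theta> = of_real (trig_p n p1 \<theta> - trig_p n p2 \<theta>)" for \<theta>
    by (simp only: trig_poly_diff[symmetric] trig_p_eq_trig_poly of_real_diff)
  then have "\<forall>\<theta>\<in>{0..2 * pi}. trig_poly n (1 - 1) (\<lambda>k. of_real (p1 k) / 2 - of_real (p2 k) / 2)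
      (\<lambda>k. of_real (p1 k) / 2 - of_real (p2 k) / 2) \<theta> = 0"
    using assms(1) by simp
  from trig_poly_eq_0_imp_coeffs_eq_0(2)[OF this assms(2)] show ?thesis
    by simp
qed

lemma trig_Q_coeffs_unique:
  assumes "\<forall>\<theta>\<in>{0..2 * pi}. trig_Q n Q1 \<theta> = trig_Q n Q2 \<theta>" and "k \<le> n"
  shows "Q1 k = Q2 k"
proof -
  have "Q1 k $ i $ j = Q2 k $ i $ j" for i j
  proof -
    have "trig_poly n (of_real (Q1 0 $ i $ j) - of_real (Q2 0 $ i $ j))
        (\<lambda>k. of_real (Q1 k $ i $ j) / 2 - of_real (Q2 k $ i $ j) / 2)
        (\<lambda>k. of_real (Q1 k $ j $ i) / 2 - of_real (Q2 k $ j $ i) / 2) \<theta>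
        = trig_Q n Q1 \<theta> $ i $ j - trig_Q n Q2 \<theta> $ i $ j" for \<theta>
      by (simp only: trig_poly_diff[symmetric] trig_Q_eq_trig_poly)
    then have "\<forall>\<theta>\<in>{0..2 * pi}. trig_poly n (of_real (Q1 0 $ i $ j) - of_real (Q2 0 $ i $ j))
        (\<lambda>k. of_real (Q1 k $ i $ j) / 2 - of_real (Q2 k $ i $ j) / 2)
        (\<lambda>k. of_real (Q1 k $ j $ i) / 2 - of_real (Q2 k $ j $ i) / 2) \<theta> = 0"
      using assms(1) by simp
    note coeffs = trig_poly_eq_0_imp_coeffs_eq_0[OF this]
    show ?thesis
      using assms(2) coeffs(1) coeffs(2)[of k] by (cases "k = 0") auto
  qed
  then show ?thesis
    by (simp add: vec_eq_iff)
qed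

section \<open>The functional\<close>

lemma circ_int_cong:
  assumes "\<And>\<theta>. \<theta> \<in> {0..2 * pi} \<Longrightarrow> f \<theta> = h \<theta>"
  shows "circ_int f = circ_int h"
  unfolding circ_int_def using integral_cong[of "{0..2 * pi}" f h] assms by simp

lemma circ_int_add:
  assumes "continuous_on {0..2 * pi} f" "continuous_on {0..2 * pi} h"
  shows "circ_int (\<lambda>\<theta>. f \<theta> + h \<theta>) = circ_int f + circ_int h"
  unfolding circ_int_def
  using integral_add[OF integrable_continuous_interval[OF assms(1)]
      integrable_continuous_interval[OF assms(2)]]
  by (simp add: add_divide_distrib)

lemma circ_int_mult_left: "circ_int (\<lambda>\<theta>. c * f \<theta>) = c * circ_int f"
  unfolding circ_int_def by simp

lemma circ_int_strict_mono:
  assumes "continuous_on {0..2 * pi} f" "continuous_on {0..2 * pi} h"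
    and "\<And>\<theta>. \<theta> \<in> {0..2 * pi} \<Longrightarrow> f \<theta> \<le> h \<theta>"
    and "\<theta>0 \<in> {0..2 * pi}" "f \<theta>0 < h \<theta>0"
  shows "circ_int f < circ_int h"
proof -
  have diff: "continuous_on {0..2 * pi} (\<lambda>\<theta>. h \<theta> - f \<theta>)"
    using assms(1,2) by (intro continuous_intros)
  have "0 \<le> integral {0..2 * pi} (\<lambda>\<theta>. h \<theta> - f \<theta>)"
    using assms(3) by (intro integral_nonneg integrable_continuous_interval[OF diff]) auto
  moreover have "integral {0..2 * pi} (\<lambda>\<theta>. h \<theta> - f \<theta>) = 0 \<longleftrightarrow>
      (\<forall>\<theta>\<in>{0..2 * pi}. h \<theta> - f \<theta> = 0)"
    by (intro integral_eq_0_iff diff) (use assms(3) in auto)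
  then have "integral {0..2 * pi} (\<lambda>\<theta>. h \<theta> - f \<theta>) \<noteq> 0"
    using assms(4,5) by force
  moreover have "integral {0..2 * pi} (\<lambda>\<theta>. h \<theta> - f \<theta>) = integral {0..2 * pi} h - integral {0..2 * pi} f"
    by (intro integral_diff integrable_continuous_interval assms(1,2))
  ultimately show ?thesis
    unfolding circ_int_def by (simp add: divide_strict_right_mono)
qed

lemma ln_det_scaleR_matrix_inv:
  fixes Q :: "complex^'n^'n"
  assumes Q: "cpos_def Q" and P: "0 < P"
  shows "ln (Re (det (P *\<^sub>R matrix_inv Q))) = real CARD('n) * ln P - ln (Re (det Q))"
proof -
  have "invertible Q"
    using cpos_def_det_nonzero[OF Q] invertible_det_nz by blast
  then have "Q ** matrix_inv Q = mat 1"
    unfolding invertible_def matrix_inv_def by (rule someI2_ex) auto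
  then have "det Q * det (matrix_inv Q) = 1"
    by (metis det_I det_mul)
  then have "det (matrix_inv Q) = 1 / det Q"
    using cpos_def_det_nonzero[OF Q] by (simp add: field_simps)
  also have "\<dots> = of_real (1 / Re (det Q))"
    by (metis cpos_def_det(1)[OF Q] of_real_1 of_real_divide)
  finally have "det (matrix_inv Q) = of_real (1 / Re (det Q))" .
  then have "Re (det (P *\<^sub>R matrix_inv Q)) = P ^ CARD('n) / Re (det Q)"
    by (simp add: det_scaleR flip: of_real_power)
  then show ?thesis
    using P cpos_def_det(2)[OF Q] by (simp add: ln_div ln_realpow)
qed

lemma trig_p_2pi: "trig_p n p (2 * pi) = trig_p n p 0"
proof -
  have "of_real (trig_p n p (2 * pi)) = (of_real (trig_p n p 0) :: complex)"
    by (simp only: trig_p_eq_trig_poly trig_poly_2pi)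
  then show ?thesis
    by simp
qed

lemma trig_Q_2pi: "trig_Q n Q (2 * pi) = trig_Q n Q 0"
  by (simp add: vec_eq_iff trig_Q_eq_trig_poly trig_poly_2pi)

lemma Bo_trig_p_pos:
  assumes "p \<in> Bo n" and "\<theta> \<in> {0..2 * pi}"
  shows "0 < trig_p n p \<theta>"
proof -
  have "\<forall>\<theta>\<in>{0..<2 * pi}. 0 < trig_p n p \<theta>"
    using assms(1) by (simp add: Bo_def)
  then show ?thesis
    using assms(2) trig_p_2pi[of n p] by (cases "\<theta> = 2 * pi") auto
qed

lemma Bm_trig_Q_cpos_def:
  assumes "Q \<in> Bm n E" and "\<theta> \<in> {0..2 * pi}"
  shows "cpos_def (trig_Q n Q \<theta>)"
proof -
  have "\<forall>\<theta>\<in>{0..<2 * pi}. cpos_def (trig_Q n Q \<theta>)"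
    using assms(1) by (simp add: Bm_def)
  then show ?thesis
    using assms(2) trig_Q_2pi[of n Q] by (cases "\<theta> = 2 * pi") auto
qed

lemma Bo_Bm_symbols_differ:
  assumes x: "(p1, Q1) \<in> Bo n \<times> Bm n E" and y: "(p2, Q2) \<in> Bo n \<times> Bm n E"
    and "(p1, Q1) \<noteq> (p2, Q2)"
  obtains \<theta> where "\<theta> \<in> {0..2 * pi}"
    and "trig_p n p1 \<theta> \<noteq> trig_p n p2 \<theta> \<or> trig_Q n Q1 \<theta> \<noteq> trig_Q n Q2 \<theta>"
proof (rule ccontr)
  assume "\<not> thesis"
  then have p: "\<forall>\<theta>\<in>{0..2 * pi}. trig_p n p1 \<theta> = trig_p n p2 \<theta>"
    and Q: "\<forall>\<theta>\<in>{0..2 * pi}. trig_Q n Q1 \<theta> = trig_Q n Q2 \<theta>"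
    using that by blast+
  have "p1 k = p2 k" for k
    using x y trig_p_coeffs_unique[OF p, of k] unfolding Bo_def
    by (cases "k = 0"; cases "k \<le> n") auto
  moreover have "Q1 k = Q2 k" for k
    using x y trig_Q_coeffs_unique[OF Q, of k] unfolding Bm_def by (cases "k \<le> n") auto
  ultimately show False
    using \<open>(p1, Q1) \<noteq> (p2, Q2)\<close> by auto
qed

lemma continuous_on_J_tilde_density_symbols:
  assumes p: "\<And>\<theta>. \<theta> \<in> {0..2 * pi} \<Longrightarrow> 0 < trig_p n p \<theta>"
    and Q: "\<And>\<theta>. \<theta> \<in> {0..2 * pi} \<Longrightarrow> cpos_def (trig_Q n Q \<theta>)"
  shows "continuous_on {0..2 * pi} (\<lambda>\<theta>. J_tilde_density lam (trig_p n p \<theta>) (trig_Q n Q \<theta>))"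
proof -
  have "0 < Re (det (trig_Q n Q \<theta>))" if "\<theta> \<in> {0..2 * pi}" for \<theta>
    using cpos_def_det(2)[OF Q[OF that]] .
  then show ?thesis
    unfolding J_tilde_density_def
    by (intro continuous_intros continuous_on_trig_p continuous_on_Re_det_trig_Q)
      (use p in force)+
qed

lemma J_tilde_eq_circ_int:
  assumes p: "\<And>\<theta>. \<theta> \<in> {0..2 * pi} \<Longrightarrow> 0 < trig_p n p \<theta>"
    and Q: "\<And>\<theta>. \<theta> \<in> {0..2 * pi} \<Longrightarrow> cpos_def (trig_Q n Q \<theta>)"
  shows "J_tilde n R c lam (p, Q) = circ_int (\<lambda>\<theta>. J_tilde_density lam (trig_p n p \<theta>) (trig_Q n Q \<theta>))
    + (\<Sum>k\<le>n. trace (transpose (Q k) ** R k)) - (\<Sum>k\<le>n. p k * c k)"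
proof -
  define m where "m = real CARD('a)"
  define F where "F \<theta> = trig_p n p \<theta> * (m * ln (trig_p n p \<theta>) - ln (Re (det (trig_Q n Q \<theta>))))
    - m * trig_p n p \<theta>" for \<theta>
  define G where "G \<theta> = lam * (1 / trig_p n p \<theta>)" for \<theta>
  have "circ_int (\<lambda>\<theta>. trig_p n p \<theta> * ln (Re (det (trig_p n p \<theta> *\<^sub>R matrix_inv (trig_Q n Q \<theta>))))
      - m * trig_p n p \<theta>) = circ_int F"
    using p Q by (intro circ_int_cong) (simp add: F_def ln_det_scaleR_matrix_inv m_def)
  moreover have "g n lam p = circ_int G"
    unfolding g_def G_def circ_int_mult_left ..
  moreover have "circ_int F + circ_int G
      = circ_int (\<lambda>\<theta>. J_tilde_density lam (trig_p n p \<theta>) (trig_Q n Q \<theta>))"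
  proof -
    have "0 < Re (det (trig_Q n Q \<theta>))" if "\<theta> \<in> {0..2 * pi}" for \<theta>
      using cpos_def_det(2)[OF Q[OF that]] .
    then have "continuous_on {0..2 * pi} F"
      unfolding F_def by (intro continuous_intros continuous_on_trig_p continuous_on_Re_det_trig_Q)
        (use p in force)+
    moreover have "continuous_on {0..2 * pi} G"
      unfolding G_def by (intro continuous_intros continuous_on_trig_p) (use p in force)
    ultimately have "circ_int F + circ_int G = circ_int (\<lambda>\<theta>. F \<theta> + G \<theta>)"
      by (rule circ_int_add[symmetric])
    then show ?thesis
      by (simp add: F_def G_def J_tilde_density_def m_def)
  qed
  ultimately show ?thesis
    unfolding J_tilde_def J_def Let_def fst_conv snd_conv m_def by simp
qed

lemma J_tilde_density_convex:
  fixes Q1 Q2 :: "complex^'n^'n"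
  assumes "0 < P1" "0 < P2" "cpos_def Q1" "cpos_def Q2" "0 < lam" "0 < t" "t < 1"
  shows "J_tilde_density lam ((1 - t) * P1 + t * P2) ((1 - t) *\<^sub>R Q1 + t *\<^sub>R Q2)
    \<le> (1 - t) * J_tilde_density lam P1 Q1 + t * J_tilde_density lam P2 Q2"
proof (cases "P1 = P2 \<and> Q1 = Q2")
  case True
  then show ?thesis
    by (simp add: scaleR_left_distrib[symmetric] algebra_simps)
next
  case False
  then show ?thesis
    using J_tilde_density_strict_convex[OF assms] by simp
qed

lemma trace_transpose_mult_convex_comb:
  "(\<Sum>k\<le>n. trace (transpose ((1 - t) *\<^sub>R X k + t *\<^sub>R Y k) ** R k))
    = (1 - t) * (\<Sum>k\<le>n. trace (transpose (X k) ** R k)) + t * (\<Sum>k\<le>n. trace (transpose (Y k) ** R k))"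
  by (simp add: trace_def matrix_matrix_mult_def transpose_def sum.distrib sum_distrib_left
      distrib_right mult.assoc)

lemma convex_comb_symbols:
  assumes "0 < trig_p n p1 \<theta>" "0 < trig_p n p2 \<theta>"
    and "cpos_def (trig_Q n Q1 \<theta>)" "cpos_def (trig_Q n Q2 \<theta>)" and "0 \<le> t" "t \<le> 1"
  shows "0 < trig_p n (\<lambda>k. (1 - t) * p1 k + t * p2 k) \<theta>"
    and "cpos_def (trig_Q n (\<lambda>k. (1 - t) *\<^sub>R Q1 k + t *\<^sub>R Q2 k) \<theta>)"
  using assms by (simp_all add: trig_p_convex_comb trig_Q_convex_comb convex_comb_pos
      cpos_def_convex_comb)

lemma circ_int_J_tilde_density_strict_convex:
  fixes Q1 Q2 :: "nat \<Rightarrow> real^'m^'m"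
  assumes p1: "\<And>\<theta>. \<theta> \<in> {0..2 * pi} \<Longrightarrow> 0 < trig_p n p1 \<theta>"
    and Q1: "\<And>\<theta>. \<theta> \<in> {0..2 * pi} \<Longrightarrow> cpos_def (trig_Q n Q1 \<theta>)"
    and p2: "\<And>\<theta>. \<theta> \<in> {0..2 * pi} \<Longrightarrow> 0 < trig_p n p2 \<theta>"
    and Q2: "\<And>\<theta>. \<theta> \<in> {0..2 * pi} \<Longrightarrow> cpos_def (trig_Q n Q2 \<theta>)"
    and lam: "0 < lam" and t: "0 < t" "t < 1"
    and \<theta>0: "\<theta>0 \<in> {0..2 * pi}"
      "trig_p n p1 \<theta>0 \<noteq> trig_p n p2 \<theta>0 \<or> trig_Q n Q1 \<theta>0 \<noteq> trig_Q n Q2 \<theta>0"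
  defines "D \<equiv> \<lambda>p (Q :: nat \<Rightarrow> real^'m^'m) \<theta>. J_tilde_density lam (trig_p n p \<theta>) (trig_Q n Q \<theta>)"
  shows "circ_int (D (\<lambda>k. (1 - t) * p1 k + t * p2 k) (\<lambda>k. (1 - t) *\<^sub>R Q1 k + t *\<^sub>R Q2 k))
    < (1 - t) * circ_int (D p1 Q1) + t * circ_int (D p2 Q2)"
proof -
  have "circ_int (D (\<lambda>k. (1 - t) * p1 k + t * p2 k) (\<lambda>k. (1 - t) *\<^sub>R Q1 k + t *\<^sub>R Q2 k))
      < circ_int (\<lambda>\<theta>. (1 - t) * D p1 Q1 \<theta> + t * D p2 Q2 \<theta>)"
  proof (rule circ_int_strict_mono)
    show "continuous_on {0..2 * pi} (D (\<lambda>k. (1 - t) * p1 k + t * p2 k) (\<lambda>k. (1 - t) *\<^sub>R Q1 k + t *\<^sub>R Q2 k))"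
      unfolding D_def using p1 Q1 p2 Q2 t
      by (intro continuous_on_J_tilde_density_symbols convex_comb_symbols) auto
    show "continuous_on {0..2 * pi} (\<lambda>\<theta>. (1 - t) * D p1 Q1 \<theta> + t * D p2 Q2 \<theta>)"
      unfolding D_def using p1 Q1 p2 Q2
      by (intro continuous_intros continuous_on_J_tilde_density_symbols)
    show "D (\<lambda>k. (1 - t) * p1 k + t * p2 k) (\<lambda>k. (1 - t) *\<^sub>R Q1 k + t *\<^sub>R Q2 k) \<theta>
        \<le> (1 - t) * D p1 Q1 \<theta> + t * D p2 Q2 \<theta>" if "\<theta> \<in> {0..2 * pi}" for \<theta>
      unfolding D_def trig_p_convex_comb trig_Q_convex_comb
      using p1 Q1 p2 Q2 that lam t by (intro J_tilde_density_convex) auto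
    show "D (\<lambda>k. (1 - t) * p1 k + t * p2 k) (\<lambda>k. (1 - t) *\<^sub>R Q1 k + t *\<^sub>R Q2 k) \<theta>0
        < (1 - t) * D p1 Q1 \<theta>0 + t * D p2 Q2 \<theta>0"
      unfolding D_def trig_p_convex_comb trig_Q_convex_comb
      using p1 Q1 p2 Q2 \<theta>0 lam t by (intro J_tilde_density_strict_convex) auto
  qed (rule \<theta>0(1))
  also have "circ_int (\<lambda>\<theta>. (1 - t) * D p1 Q1 \<theta> + t * D p2 Q2 \<theta>)
      = (1 - t) * circ_int (D p1 Q1) + t * circ_int (D p2 Q2)"
    unfolding circ_int_mult_left[symmetric] D_def using p1 Q1 p2 Q2
    by (intro circ_int_add continuous_intros continuous_on_J_tilde_density_symbols)
  finally show ?thesis .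
qed

lemma J_tilde_strict_convex_comb:
  fixes Q1 Q2 :: "nat \<Rightarrow> real^'m^'m"
  assumes p1: "\<And>\<theta>. \<theta> \<in> {0..2 * pi} \<Longrightarrow> 0 < trig_p n p1 \<theta>"
    and Q1: "\<And>\<theta>. \<theta> \<in> {0..2 * pi} \<Longrightarrow> cpos_def (trig_Q n Q1 \<theta>)"
    and p2: "\<And>\<theta>. \<theta> \<in> {0..2 * pi} \<Longrightarrow> 0 < trig_p n p2 \<theta>"
    and Q2: "\<And>\<theta>. \<theta> \<in> {0..2 * pi} \<Longrightarrow> cpos_def (trig_Q n Q2 \<theta>)"
    and lam: "0 < lam" and t: "0 < t" "t < 1"
    and \<theta>0: "\<theta>0 \<in> {0..2 * pi}"
      "trig_p n p1 \<theta>0 \<noteq> trig_p n p2 \<theta>0 \<or> trig_Q n Q1 \<theta>0 \<noteq> trig_Q n Q2 \<theta>0"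
  shows "J_tilde n R c lam (\<lambda>k. (1 - t) * p1 k + t * p2 k, \<lambda>k. (1 - t) *\<^sub>R Q1 k + t *\<^sub>R Q2 k)
    < (1 - t) * J_tilde n R c lam (p1, Q1) + t * J_tilde n R c lam (p2, Q2)"
proof -
  define p where "p = (\<lambda>k. (1 - t) * p1 k + t * p2 k)"
  define Q where "Q = (\<lambda>k. (1 - t) *\<^sub>R Q1 k + t *\<^sub>R Q2 k)"
  define D where "D p Q \<theta> = J_tilde_density lam (trig_p n p \<theta>) (trig_Q n Q \<theta>)"
    for p and Q :: "nat \<Rightarrow> real^'m^'m" and \<theta>
  define T where "T Q = (\<Sum>k\<le>n. trace (transpose (Q k) ** R k))" for Q :: "nat \<Rightarrow> real^'m^'m"
  define C where "C p = (\<Sum>k\<le>n. p k * c k)" for p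
  have J: "J_tilde n R c lam (p, Q) = circ_int (D p Q) + T Q - C p"
    if "\<And>\<theta>. \<theta> \<in> {0..2 * pi} \<Longrightarrow> 0 < trig_p n p \<theta>"
      and "\<And>\<theta>. \<theta> \<in> {0..2 * pi} \<Longrightarrow> cpos_def (trig_Q n Q \<theta>)" for p Q
    unfolding D_def T_def C_def by (rule J_tilde_eq_circ_int[OF that])
  have "J_tilde n R c lam (p, Q) = circ_int (D p Q) + T Q - C p"
    unfolding p_def Q_def using p1 Q1 p2 Q2 t by (intro J convex_comb_symbols) auto
  moreover have "J_tilde n R c lam (p1, Q1) = circ_int (D p1 Q1) + T Q1 - C p1"
    by (rule J[OF p1 Q1])
  moreover have "J_tilde n R c lam (p2, Q2) = circ_int (D p2 Q2) + T Q2 - C p2"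
    by (rule J[OF p2 Q2])
  moreover have "T Q = (1 - t) * T Q1 + t * T Q2"
    unfolding T_def Q_def by (rule trace_transpose_mult_convex_comb)
  moreover have "C p = (1 - t) * C p1 + t * C p2"
    unfolding C_def p_def by (simp add: sum.distrib sum_distrib_left distrib_right mult.assoc)
  moreover have "circ_int (D p Q) < (1 - t) * circ_int (D p1 Q1) + t * circ_int (D p2 Q2)"
    unfolding D_def p_def Q_def by (rule circ_int_J_tilde_density_strict_convex[OF assms])
  ultimately show ?thesis
    unfolding p_def[symmetric] Q_def[symmetric] by (simp only:) (simp add: algebra_simps)
qed

theorem proposition1:
  fixes n :: nat and E :: "('m::finite \<times> 'm) set"
    and R :: "nat \<Rightarrow> real^'m^'m" and c :: "nat \<Rightarrow> real" and lam :: real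
  assumes "n \<ge> 1"
    and "\<forall>j h. (j, h) \<in> E \<longrightarrow> (h, j) \<in> E"
    and "\<forall>j. (j, j) \<in> E"
    and "transpose (R 0) = R 0"
    and "lam > 0"
  shows "strict_convex_on_coeffs (Bo n \<times> Bm n E) (J_tilde n R c lam)"
  unfolding strict_convex_on_coeffs_def
proof (intro ballI impI allI)
  fix x y :: "(nat \<Rightarrow> real) \<times> (nat \<Rightarrow> real^'m^'m)" and t :: real
  assume x: "x \<in> Bo n \<times> Bm n E" and y: "y \<in> Bo n \<times> Bm n E" and "x \<noteq> y"
    and t: "0 < t \<and> t < 1"
  obtain p1 Q1 p2 Q2 where xy: "x = (p1, Q1)" "y = (p2, Q2)"
    by fastforce
  obtain \<theta>0 where "\<theta>0 \<in> {0..2 * pi}"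
    and "trig_p n p1 \<theta>0 \<noteq> trig_p n p2 \<theta>0 \<or> trig_Q n Q1 \<theta>0 \<noteq> trig_Q n Q2 \<theta>0"
    using Bo_Bm_symbols_differ x y \<open>x \<noteq> y\<close> unfolding xy by metis
  moreover have "p1 \<in> Bo n" "Q1 \<in> Bm n E" "p2 \<in> Bo n" "Q2 \<in> Bm n E"
    using x y unfolding xy by auto
  ultimately show "J_tilde n R c lam (\<lambda>k. (1 - t) * fst x k + t * fst y k,
      \<lambda>k. (1 - t) *\<^sub>R snd x k + t *\<^sub>R snd y k) < (1 - t) * J_tilde n R c lam x + t * J_tilde n R c lam y"
    unfolding xy fst_conv snd_conv using \<open>lam > 0\<close> t
    by (intro J_tilde_strict_convex_comb Bo_trig_p_pos Bm_trig_Q_cpos_def) auto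
qed

end
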